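(* Let $\mathbb{T}^2=(\mathbb{R}/2\pi\mathbb{Z})^2$, let $\varphi:\mathbb{T}^2\to\mathbb{R}$ be nontrivial and real-analytic, and let $w:\mathbb{T}^2\times\mathbb{T}^2\to\mathbb{R}$ be real-analytic with a unique non-degenerate minimum at $(0,0)$. Let $p\in U_\delta(0)$ with $\varphi(q_0(p))=0$. Then for the coefficients $\hat\alpha_1(p)$ and $\hat c_1(p)$ of the expansion described in the context, $|\hat\alpha_1(p)|+|\hat c_1(p)|\neq0$.
   Context: For $p\in\mathbb{T}^2$ write $w_p(q)=w(p,q)$. There is a neighborhood $U_\delta(0)\subset\mathbb{T}^2$ of $0$ and an analytic map $q_0:U_\delta(0)\to\mathbb{T}^2$ such that $q_0(p)$ is the unique non-degenerate minimum point of $w_p$; $m(p)=\min_q w_p(q)$, $M(p)=\max_q w_p(q)$. Let $\Omega(p;z)=\int_{\mathbb{T}^2}\frac{\varphi^2(s)\,ds}{w_p(s)-z}$ and, for $\mu>0$, $\Delta(\mu,p;z)=1-\mu\Omega(p;z)$. When $\varphi(q_0(p))=0$, set $\mu(p)=\left(\int_{\mathbb{T}^2}\frac{\varphi^2(s)ds}{w_p(s)-m(p)}\right)^{-1}>0$. In this case, for sufficiently small $m(p)-z>0$, one has the convergent expansion $\Delta(\mu,p;z)=1-\frac{\mu}{\mu(p)}-\mu\ln(m(p)-z)\sum_{n\ge1}\hat\alpha_n(p)(m(p)-z)^n-\mu\sum_{n\ge1}\hat c_n(p)(m(p)-z)^n$ with real coefficients $\hat\alpha_n(p),\hat c_n(p)$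 (independent of $\mu$), where $\ln$ is real for $m(p)-z>0$. *)

theory Defs
  imports "HOL-Analysis.Analysis"
begin

text \<open>The torus T^n = (R / 2 pi Z)^n is modelled by real^'n; functions on
  the torus are functions on real^'n that are 2 pi-periodic in each coordinate.\<close>

definition torus_periodic :: "(real^'n \<Rightarrow> real) \<Rightarrow> bool" where
  "torus_periodic f \<longleftrightarrow> (\<forall>x i. f (x + (2*pi) *\<^sub>R axis i 1) = f x)"

definition in_lattice :: "real^'n \<Rightarrow> bool" where
  "in_lattice x \<longleftrightarrow> (\<forall>i. \<exists>k::int. x $ i = 2 * pi * of_int k)"

definition real_analytic_at :: "(real^'n \<Rightarrow> real) \<Rightarrow> real^'n \<Rightarrow> bool" where
  "real_analytic_at f x \<longleftrightarrow>
     (\<exists>r>0. \<exists>a :: ('n \<Rightarrow> nat) \<Rightarrow> real. \<forall>y\<in>ball x r.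
        ((\<lambda>k. a k * (\<Prod>i\<in>UNIV. (y $ i - x $ i) ^ k i)) has_sum f y) UNIV)"

definition real_analytic_on :: "(real^'n) set \<Rightarrow> (real^'n \<Rightarrow> real) \<Rightarrow> bool" where
  "real_analytic_on S f \<longleftrightarrow> (\<forall>x\<in>S. real_analytic_at f x)"

definition join_fun :: "(real^'n \<Rightarrow> real^'n \<Rightarrow> real) \<Rightarrow> real^('n+'n) \<Rightarrow> real" where
  "join_fun w z = w (\<chi> i. z $ Inl i) (\<chi> i. z $ Inr i)"

definition partial_deriv :: "'n \<Rightarrow> (real^'n \<Rightarrow> real) \<Rightarrow> real^'n \<Rightarrow> real" where
  "partial_deriv j f y = deriv (\<lambda>s. f (y + s *\<^sub>R axis j 1)) 0"

definition hessian :: "(real^'n \<Rightarrow> real) \<Rightarrow> real^'n \<Rightarrow> real^'n^'n" where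
  "hessian f x = (\<chi> i j. partial_deriv i (partial_deriv j f) x)"

definition unique_nondeg_min :: "(real^'n \<Rightarrow> real) \<Rightarrow> real^'n \<Rightarrow> bool" where
  "unique_nondeg_min f x0 \<longleftrightarrow>
     (\<forall>x. f x0 \<le> f x) \<and> (\<forall>x. f x = f x0 \<longrightarrow> in_lattice (x - x0)) \<and>
     det (hessian f x0) \<noteq> 0"

definition m_fun :: "(real^2 \<Rightarrow> real^2 \<Rightarrow> real) \<Rightarrow> real^2 \<Rightarrow> real" where
  "m_fun w p = (INF q. w p q)"

text \<open>Integration over T^2 = integration over the fundamental cell [0,2 pi]^2.\<close>
definition torus_box :: "(real^2) set" where
  "torus_box = cbox 0 (\<chi> i. 2 * pi)"

definition Omega :: "(real^2 \<Rightarrow> real) \<Rightarrow> (real^2 \<Rightarrow> real^2 \<Rightarrow> real) \<Rightarrow> real^2 \<Rightarrow> real \<Rightarrow> real" where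
  "Omega \<phi> w p z = integral torus_box (\<lambda>s. (\<phi> s)^2 / (w p s - z))"

definition Delta :: "(real^2 \<Rightarrow> real) \<Rightarrow> (real^2 \<Rightarrow> real^2 \<Rightarrow> real) \<Rightarrow> real \<Rightarrow> real^2 \<Rightarrow> real \<Rightarrow> real" where
  "Delta \<phi> w \<mu> p z = 1 - \<mu> * Omega \<phi> w p z"

definition mu_p :: "(real^2 \<Rightarrow> real) \<Rightarrow> (real^2 \<Rightarrow> real^2 \<Rightarrow> real) \<Rightarrow> real^2 \<Rightarrow> real" where
  "mu_p \<phi> w p = inverse (integral torus_box (\<lambda>s. (\<phi> s)^2 / (w p s - m_fun w p)))"

end

theory Submission
  imports Defs "HOL-Real_Asymp.Real_Asymp"
begin

(* If alpha_1(p) = c_1(p) = 0, the expansion makes Omega(p; m(p) - t) = 1/mu(p) + O(t^2 |ln t|)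
   as t -> 0+, so Omega(p; m - t/2) - Omega(p; m - t) = o(t). On the other hand, since w_p >= m,
   the pointwise estimate 1/(D + t/2) - 1/(D + t) >= (t/2)/(D + 1)^2 (D = w_p - m >= 0, t <= 1)
   bounds that difference below by t/2 times the integral of phi^2/(w_p - m + 1)^2, which is
   positive because phi is continuous, periodic and not identically zero. Only continuity
   (from analyticity), periodicity and the minimum property of w_p enter; the hypothesis
   phi(q_0(p)) = 0 matters only for the existence of the expansion, which is assumed. *)

lemma has_sum_abs_le:
  fixes f g :: "'a \<Rightarrow> real"
  assumes "(f has_sum S) A" and "(g has_sum T) A" and "\<And>k. k \<in> A \<Longrightarrow> \<bar>f k\<bar> \<le> g k"
  shows "\<bar>S\<bar> \<le> T"
proof -
  have "S \<le> T"
    using assms(3) by (intro has_sum_mono[OF assms(1,2)]) (auto dest: abs_le_D1)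
  moreover have "- S \<le> T"
    using assms(3) by (intro has_sum_mono[OF has_sum_uminusI[OF assms(1)] assms(2)])
      (auto dest: abs_le_D2)
  ultimately show ?thesis by linarith
qed

lemma prod_zero_power_eq:
  fixes k :: "'n::finite \<Rightarrow> nat"
  shows "(\<Prod>i\<in>UNIV. (0::real) ^ k i) = (if k = (\<lambda>_. 0) then 1 else 0)"
  by (auto simp: fun_eq_iff intro!: prod_zero)

lemma monomial_increment_bound:
  fixes x y :: "real^'n" and k :: "'n \<Rightarrow> nat"
  assumes y: "\<And>i. \<bar>y $ i - x $ i\<bar> \<le> d * \<rho>" and d: "0 \<le> d" "d \<le> 1" and \<rho>: "0 \<le> \<rho>"
  shows "\<bar>(\<Prod>i\<in>UNIV. (y $ i - x $ i) ^ k i) - (\<Prod>i\<in>UNIV. (0::real) ^ k i)\<bar>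
           \<le> d * \<rho> ^ (\<Sum>i\<in>UNIV. k i)"
proof (cases "k = (\<lambda>_. 0)")
  case False
  then obtain j where j: "k j \<noteq> 0" by auto
  have "1 \<le> (\<Sum>i\<in>UNIV. k i)"
    using j member_le_sum[of j UNIV k] by simp
  hence "d ^ (\<Sum>i\<in>UNIV. k i) \<le> d"
    using d power_decreasing[of 1 "\<Sum>i\<in>UNIV. k i" d] by simp
  have "\<bar>\<Prod>i\<in>UNIV. (y $ i - x $ i) ^ k i\<bar> = (\<Prod>i\<in>UNIV. \<bar>y $ i - x $ i\<bar> ^ k i)"
    by (simp add: abs_prod power_abs)
  also have "\<dots> \<le> (\<Prod>i\<in>UNIV. (d * \<rho>) ^ k i)"
    by (intro prod_mono conjI power_mono y) auto
  also have "\<dots> = d ^ (\<Sum>i\<in>UNIV. k i) * \<rho> ^ (\<Sum>i\<in>UNIV. k i)"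
    by (simp add: power_sum power_mult_distrib prod.distrib)
  also have "\<dots> \<le> d * \<rho> ^ (\<Sum>i\<in>UNIV. k i)"
    using \<open>d ^ (\<Sum>i\<in>UNIV. k i) \<le> d\<close> \<rho> by (intro mult_right_mono) auto
  finally show ?thesis
    using False by (simp add: prod_zero_power_eq)
qed (use d \<rho> in simp)

lemma real_analytic_at_increment_bound:
  fixes f :: "real^'n \<Rightarrow> real"
  assumes "real_analytic_at f x"
  obtains \<rho> M where "\<rho> > 0" and "\<And>y. y \<in> cball x \<rho> \<Longrightarrow> \<bar>f y - f x\<bar> \<le> M * dist y x"
proof -
  obtain r a where r: "r > 0" and series: "\<And>y. y \<in> ball x r \<Longrightarrow>
        ((\<lambda>k. a k * (\<Prod>i\<in>UNIV. (y $ i - x $ i) ^ k i)) has_sum f y) UNIV"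
    using assms unfolding real_analytic_at_def by blast
  define \<rho> where "\<rho> = r / (2 * real CARD('n))"
  have "1 < 2 * real CARD('n)"
    using zero_less_card_finite[where 'a='n] by linarith
  hence \<rho>: "\<rho> > 0" "\<rho> < r"
    using r by (simp_all add: \<rho>_def divide_less_eq)
  \<comment> \<open>Convergence at the corner x + (\<rho>, ..., \<rho>) of the polydisc gives absolute convergence on it.\<close>
  have "norm (\<chi> i::'n. \<rho>) \<le> (\<Sum>i\<in>UNIV. \<bar>(\<chi> i::'n. \<rho>) $ i\<bar>)"
    by (rule norm_le_l1_cart)
  also have "\<dots> = real CARD('n) * \<rho>"
    using \<rho> by simp
  also have "\<dots> < r"
    using r by (simp add: \<rho>_def)
  finally have "x + (\<chi> i. \<rho>) \<in> ball x r"
    by (simp add: dist_norm)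
  from series[OF this] have "(\<lambda>k. a k * \<rho> ^ (\<Sum>i\<in>UNIV. k i)) summable_on UNIV"
    by (simp add: power_sum has_sum_imp_summable)
  hence "(\<lambda>k. \<bar>a k * \<rho> ^ (\<Sum>i\<in>UNIV. k i)\<bar>) summable_on UNIV"
    by (subst (asm) summable_on_iff_abs_summable_on_real) simp
  then obtain M where M: "((\<lambda>k. \<bar>a k\<bar> * \<rho> ^ (\<Sum>i\<in>UNIV. k i)) has_sum M) UNIV"
    using \<rho> by (auto simp: abs_mult summable_on_def)
  have "\<bar>f y - f x\<bar> \<le> M / \<rho> * dist y x" if y: "y \<in> cball x \<rho>" for y
  proof -
    define d where "d = dist y x / \<rho>"
    have d: "0 \<le> d" "d \<le> 1" and d\<rho>: "d * \<rho> = dist y x"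
      using y \<rho> by (simp_all add: d_def dist_commute)
    have "\<bar>y $ i - x $ i\<bar> \<le> d * \<rho>" for i
      using component_le_norm_cart[of "y - x" i] by (simp add: d\<rho> dist_norm)
    hence "\<bar>a k\<bar> * \<bar>(\<Prod>i\<in>UNIV. (y $ i - x $ i) ^ k i) - (\<Prod>i\<in>UNIV. (0::real) ^ k i)\<bar>
        \<le> \<bar>a k\<bar> * (d * \<rho> ^ (\<Sum>i\<in>UNIV. k i))" for k
      using \<rho> by (intro mult_left_mono monomial_increment_bound d) auto
    hence bound: "\<bar>a k * (\<Prod>i\<in>UNIV. (y $ i - x $ i) ^ k i) - a k * (\<Prod>i\<in>UNIV. (0::real) ^ k i)\<bar>
        \<le> d * (\<bar>a k\<bar> * \<rho> ^ (\<Sum>i\<in>UNIV. k i))" for k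
      by (simp add: abs_mult right_diff_distrib[symmetric] mult.left_commute)
    have "((\<lambda>k. a k * (\<Prod>i\<in>UNIV. (y $ i - x $ i) ^ k i) - a k * (\<Prod>i\<in>UNIV. (0::real) ^ k i))
            has_sum (f y - f x)) UNIV"
      using has_sum_add[OF series has_sum_uminusI[OF series[of x]]] y \<rho> by simp
    hence "\<bar>f y - f x\<bar> \<le> d * M"
      using has_sum_cmult_right[OF M] bound by (rule has_sum_abs_le)
    thus ?thesis
      by (simp add: d_def mult.commute)
  qed
  with \<rho> show ?thesis using that by blast
qed

lemma real_analytic_at_imp_isCont:
  fixes f :: "real^'n \<Rightarrow> real"
  assumes "real_analytic_at f x"
  shows "isCont f x"
proof -
  obtain \<rho> M where \<rho>: "\<rho> > 0" and bound: "\<And>y. y \<in> cball x \<rho> \<Longrightarrow> \<bar>f y - f x\<bar> \<le> M * dist y x"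
    using real_analytic_at_increment_bound[OF assms] by blast
  have "eventually (\<lambda>y. norm (f y - f x) \<le> M * dist y x) (at x)"
    using eventually_at_ball[OF \<rho>] by eventually_elim (simp add: bound dist_commute)
  moreover have "((\<lambda>y. M * dist y x) \<longlongrightarrow> 0) (at x)"
  proof (rule tendsto_mult_right_zero)
    have "((\<lambda>y. dist y x) \<longlongrightarrow> dist x x) (at x)"
      by (intro tendsto_intros)
    thus "((\<lambda>y. dist y x) \<longlongrightarrow> 0) (at x)"
      by simp
  qed
  ultimately show ?thesis
    unfolding isCont_def by (subst Lim_null) (rule Lim_null_comparison)
qed

lemma real_analytic_on_imp_continuous_on:
  fixes f :: "real^'n \<Rightarrow> real"
  assumes "real_analytic_on UNIV f"
  shows "continuous_on S f"
  using assms real_analytic_at_imp_isCont continuous_at_imp_continuous_on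
  unfolding real_analytic_on_def by blast

lemma continuous_on_join_fun_slice:
  fixes w :: "real^'n \<Rightarrow> real^'n \<Rightarrow> real"
  assumes "continuous_on UNIV (join_fun w)"
  shows "continuous_on S (w p)"
proof -
  define e :: "real^'n \<Rightarrow> real^('n+'n)"
    where "e = (\<lambda>s. \<chi> j. case j of Inl i \<Rightarrow> p $ i | Inr i \<Rightarrow> s $ i)"
  have "continuous_on S e"
    unfolding e_def
  proof (rule continuous_on_vec_lambda)
    show "continuous_on S (\<lambda>s. case j of Inl i \<Rightarrow> p $ i | Inr i \<Rightarrow> s $ i)" for j :: "'n+'n"
      by (cases j) (auto intro!: continuous_intros)
  qed
  hence "continuous_on S (join_fun w \<circ> e)"
    using assms by (rule continuous_on_compose[OF _ continuous_on_subset]) simp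
  moreover have "join_fun w \<circ> e = w p"
    by (simp add: fun_eq_iff join_fun_def e_def vec_eq_iff)
  ultimately show ?thesis by simp
qed

lemma torus_periodic_shift_int:
  assumes "torus_periodic f"
  shows "f (x + (2 * pi * of_int k) *\<^sub>R axis i 1) = f x"
proof (induction k rule: int_induct[where k=0])
  case (step1 k)
  have "f (x + (2 * pi * of_int (k+1)) *\<^sub>R axis i 1)
          = f ((x + (2 * pi * of_int k) *\<^sub>R axis i 1) + (2 * pi) *\<^sub>R axis i 1)"
    by (simp add: algebra_simps)
  with step1 assms show ?case
    unfolding torus_periodic_def by simp
next
  case (step2 k)
  have "f (x + (2 * pi * of_int k) *\<^sub>R axis i 1)
          = f ((x + (2 * pi * of_int (k-1)) *\<^sub>R axis i 1) + (2 * pi) *\<^sub>R axis i 1)"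
    by (simp add: algebra_simps)
  with step2 assms show ?case
    unfolding torus_periodic_def by simp
qed simp

lemma torus_periodic_shift_lattice:
  assumes "torus_periodic f" and "in_lattice v"
  shows "f (x + v) = f x"
proof -
  have "f (x + (\<Sum>i\<in>I. (v $ i) *\<^sub>R axis i 1)) = f x" for I
  proof (induction I arbitrary: x rule: infinite_finite_induct)
    case (insert i I)
    obtain k :: int where "v $ i = 2 * pi * of_int k"
      using assms(2) unfolding in_lattice_def by blast
    with insert.IH[of "x + (v $ i) *\<^sub>R axis i 1"] insert.hyps show ?case
      by (simp add: add.assoc add.left_commute torus_periodic_shift_int[OF assms(1)])
  qed simp_all
  from this[of UNIV] show ?thesis
    using basis_expansion[of v] by (simp add: scalar_mult_eq_scaleR)
qed

lemma torus_periodic_value_in_cell: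
  fixes f :: "real^'n \<Rightarrow> real"
  assumes "torus_periodic f"
  obtains y where "y \<in> cbox 0 (\<chi> i. 2 * pi)" and "f y = f x"
proof
  define v :: "real^'n" where "v = (\<chi> i. 2 * pi * of_int (- \<lfloor>x $ i / (2 * pi)\<rfloor>))"
  have "in_lattice v"
    unfolding in_lattice_def v_def vec_lambda_beta by blast
  thus "f (x + v) = f x"
    by (rule torus_periodic_shift_lattice[OF assms])
  have "x $ i + v $ i = 2 * pi * frac (x $ i / (2 * pi))" for i
    by (simp add: v_def frac_def algebra_simps)
  thus "x + v \<in> cbox 0 (\<chi> i. 2 * pi)"
    using frac_lt_1 by (auto simp: mem_box_cart intro: less_imp_le)
qed

lemma m_fun_le:
  assumes "\<And>q. w p q' \<le> w p q"
  shows "m_fun w p \<le> w p s"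
  unfolding m_fun_def by (rule cINF_lower[OF bdd_belowI2[OF assms]]) simp

lemma integral_torus_box_pos:
  fixes f :: "real^2 \<Rightarrow> real"
  assumes "continuous_on torus_box f" and "\<And>s. s \<in> torus_box \<Longrightarrow> 0 \<le> f s"
    and "y \<in> torus_box" and "f y \<noteq> 0"
  shows "integral torus_box f > 0"
proof -
  have "(\<chi> i. pi) \<in> box 0 (\<chi> i::2. 2 * pi)"
    by (simp add: mem_box_cart)
  hence "integral torus_box f \<noteq> 0"
    using assms integral_cbox_eq_0_iff[of 0 "\<chi> i. 2 * pi" f] unfolding torus_box_def by blast
  moreover have "integral torus_box f \<ge> 0"
    using assms integrable_continuous[of 0 "\<chi> i. 2 * pi" f]
    by (auto simp: torus_box_def intro: integral_nonneg)
  ultimately show ?thesis by simp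
qed

lemma inverse_halving_gap:
  fixes D P t :: real
  assumes "0 \<le> D" and "0 \<le> P" and "0 < t" and "t \<le> 1"
  shows "t/2 * (P / (D + 1)^2) \<le> P / (D + t/2) - P / (D + t)"
proof -
  have "t/2 * (P / (D + 1)^2) = P * (t/2) / ((D + 1) * (D + 1))"
    by (simp add: power2_eq_square)
  also have "\<dots> \<le> P * (t/2) / ((D + t/2) * (D + t))"
    using assms by (intro divide_left_mono mult_mono mult_pos_pos) auto
  also have "\<dots> = P / (D + t/2) - P / (D + t)"
    using assms by (simp add: field_simps)
  finally show ?thesis .
qed

lemma Omega_halving_gap:
  assumes "continuous_on UNIV \<phi>" and "continuous_on UNIV (w p)" and "\<And>s. m \<le> w p s"
    and "0 < t" and "t \<le> 1"
  shows "t/2 * integral torus_box (\<lambda>s. \<phi> s ^ 2 / (w p s - m + 1)^2)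
           \<le> Omega \<phi> w p (m - t/2) - Omega \<phi> w p (m - t)"
proof -
  have integrable: "(\<lambda>s. \<phi> s ^ 2 / (w p s - m + c) ^ k) integrable_on torus_box" if "c > 0" for c k
  proof -
    have "w p s - m + c \<noteq> 0" for s
      using assms(3)[of s] that by linarith
    thus ?thesis
      unfolding torus_box_def
      by (intro integrable_continuous continuous_intros continuous_on_subset[OF assms(1)]
          continuous_on_subset[OF assms(2)]) auto
  qed
  have "t/2 * integral torus_box (\<lambda>s. \<phi> s ^ 2 / (w p s - m + 1)^2)
          = integral torus_box (\<lambda>s. t/2 * (\<phi> s ^ 2 / (w p s - m + 1)^2))"
    using integral_cmul[of torus_box "t/2" "\<lambda>s. \<phi> s ^ 2 / (w p s - m + 1)^2"]
    by (simp only: real_scaleR_def)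
  also have "\<dots> \<le> integral torus_box (\<lambda>s. \<phi> s ^ 2 / (w p s - m + t/2) - \<phi> s ^ 2 / (w p s - m + t))"
  proof (rule integral_le)
    show "(\<lambda>s. t/2 * (\<phi> s ^ 2 / (w p s - m + 1)^2)) integrable_on torus_box"
      using integrable_on_cmult_left[OF integrable[of 1 2], of "t/2"] by simp
    show "(\<lambda>s. \<phi> s ^ 2 / (w p s - m + t/2) - \<phi> s ^ 2 / (w p s - m + t)) integrable_on torus_box"
      using integrable[of "t/2" 1] integrable[of t 1] assms(4) by (intro integrable_diff) auto
    show "t/2 * (\<phi> s ^ 2 / (w p s - m + 1)^2)
            \<le> \<phi> s ^ 2 / (w p s - m + t/2) - \<phi> s ^ 2 / (w p s - m + t)" for s
      using assms(3)[of s] assms(4,5) by (intro inverse_halving_gap) auto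
  qed
  also have "\<dots> = Omega \<phi> w p (m - t/2) - Omega \<phi> w p (m - t)"
    using integrable[of "t/2" 1] integrable[of t 1] assms
    by (simp add: Omega_def integral_diff algebra_simps)
  finally show ?thesis .
qed

lemma integral_torus_box_square_div_pos:
  assumes "continuous_on UNIV \<phi>" and "continuous_on UNIV W" and "\<And>s. m \<le> W s"
    and "torus_periodic \<phi>" and "\<phi> x \<noteq> 0"
  shows "integral torus_box (\<lambda>s. \<phi> s ^ 2 / (W s - m + 1)^2) > 0"
proof -
  obtain y where y: "y \<in> torus_box" "\<phi> y = \<phi> x"
    using torus_periodic_value_in_cell[OF assms(4)] unfolding torus_box_def by metis
  have "W s - m + 1 \<noteq> 0" for s
    using assms(3)[of s] by linarith
  hence "continuous_on torus_box (\<lambda>s. \<phi> s ^ 2 / (W s - m + 1)^2)"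
    by (intro continuous_intros continuous_on_subset[OF assms(1)] continuous_on_subset[OF assms(2)]) auto
  thus ?thesis
    using y assms(3)[of y] assms(5) by (intro integral_torus_box_pos) auto
qed

lemma Omega_halving_quotient_eventually_ge:
  assumes "continuous_on UNIV \<phi>" and "continuous_on UNIV (w p)" and "\<And>s. m \<le> w p s"
    and "torus_periodic \<phi>" and "\<phi> x \<noteq> 0"
  obtains K where "K > 0"
    and "eventually (\<lambda>t. K \<le> (Omega \<phi> w p (m - t/2) - Omega \<phi> w p (m - t)) / t) (at_right 0)"
proof
  define I where "I = integral torus_box (\<lambda>s. \<phi> s ^ 2 / (w p s - m + 1)^2)"
  show "I/2 > 0"
    using integral_torus_box_square_div_pos[OF assms(1-5)] unfolding I_def by simp
  have "t/2 * I \<le> Omega \<phi> w p (m - t/2) - Omega \<phi> w p (m - t)" if "0 < t" "t \<le> 1" for t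
    using Omega_halving_gap[where w=w and p=p, OF assms(1-3) that] unfolding I_def .
  thus "eventually (\<lambda>t. I/2 \<le> (Omega \<phi> w p (m - t/2) - Omega \<phi> w p (m - t)) / t) (at_right 0)"
    using eventually_at_right_real[OF zero_less_one]
    by (elim eventually_mono) (simp add: field_simps)
qed

lemma power_series_without_linear_term:
  fixes a :: "nat \<Rightarrow> real"
  assumes "\<epsilon> > 0" and "a 1 = 0"
    and summable: "\<And>t. t \<in> {0<..<\<epsilon>} \<Longrightarrow> summable (\<lambda>n. a (Suc n) * t ^ Suc n)"
  obtains B where "isCont B 0" and "\<And>t. t \<in> {0<..<\<epsilon>} \<Longrightarrow> (\<Sum>n. a (Suc n) * t ^ Suc n) = t^2 * B t"
proof
  have tail: "(\<lambda>n. a (n+2) * t^n) sums ((\<Sum>n. a (Suc n) * t ^ Suc n) / t^2)" if t: "t \<in> {0<..<\<epsilon>}" for t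
  proof -
    have "(\<lambda>n. a (Suc (Suc n)) * t ^ Suc (Suc n)) sums (\<Sum>n. a (Suc n) * t ^ Suc n)"
      using summable[OF t] sums_Suc_iff[of "\<lambda>n. a (Suc n) * t ^ Suc n"] \<open>a 1 = 0\<close>
      by (simp add: summable_sums)
    hence "(\<lambda>n. a (Suc (Suc n)) * t ^ Suc (Suc n) / t^2) sums ((\<Sum>n. a (Suc n) * t ^ Suc n) / t^2)"
      by (rule sums_divide)
    thus ?thesis
      using t by (simp add: power2_eq_square field_simps)
  qed
  show "isCont (\<lambda>t. \<Sum>n. a (n+2) * t^n) 0"
    using tail[of "\<epsilon>/2"] \<open>\<epsilon> > 0\<close> by (intro isCont_powser[of _ "\<epsilon>/2"]) (auto simp: sums_iff)
  show "(\<Sum>n. a (Suc n) * t ^ Suc n) = t^2 * (\<Sum>n. a (n+2) * t^n)" if "t \<in> {0<..<\<epsilon>}" for t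
    using tail[OF that] that by (simp add: sums_iff)
qed

lemma halving_quotient_tendsto_zero:
  fixes g A B :: "real \<Rightarrow> real"
  assumes "isCont A 0" and "isCont B 0" and "\<epsilon> > 0"
    and g: "\<And>t. t \<in> {0<..<\<epsilon>} \<Longrightarrow> g t = J + ln t * (t^2 * A t) + t^2 * B t"
  shows "((\<lambda>t. (g (t/2) - g t) / t) \<longlongrightarrow> 0) (at_right 0)"
proof -
  have "((\<lambda>t::real. t/2) \<longlongrightarrow> 0) (at_right 0)" and "((\<lambda>t::real. t) \<longlongrightarrow> 0) (at_right 0)"
    by real_asymp+
  hence "((\<lambda>t. A (t/2)) \<longlongrightarrow> A 0) (at_right 0)" "((\<lambda>t. B (t/2)) \<longlongrightarrow> B 0) (at_right 0)"
    and "(A \<longlongrightarrow> A 0) (at_right 0)" "(B \<longlongrightarrow> B 0) (at_right 0)"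
    using assms(1,2) by (auto intro: isCont_tendsto_compose[where g=A] isCont_tendsto_compose[where g=B])
  moreover have "((\<lambda>t::real. t/4 * ln (t/2)) \<longlongrightarrow> 0) (at_right 0)"
    and "((\<lambda>t::real. t * ln t) \<longlongrightarrow> 0) (at_right 0)" and "((\<lambda>t::real. t/4) \<longlongrightarrow> 0) (at_right 0)"
    by real_asymp+
  ultimately have "((\<lambda>t. t/4 * ln (t/2) * A (t/2) + t/4 * B (t/2) - t * ln t * A t - t * B t)
                    \<longlongrightarrow> 0 * A 0 + 0 * B 0 - 0 * A 0 - 0 * B 0) (at_right 0)"
    using \<open>((\<lambda>t::real. t) \<longlongrightarrow> 0) (at_right 0)\<close> by (intro tendsto_intros)
  moreover have "eventually (\<lambda>t. t/4 * ln (t/2) * A (t/2) + t/4 * B (t/2) - t * ln t * A t - t * B t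
                   = (g (t/2) - g t) / t) (at_right 0)"
    using eventually_at_right_real[OF \<open>\<epsilon> > 0\<close>]
    by eventually_elim (simp add: g power2_eq_square field_simps)
  ultimately show ?thesis
    by (simp add: tendsto_cong)
qed

lemma Omega_expansion_without_linear_terms:
  fixes \<alpha> c :: "nat \<Rightarrow> real"
  assumes "\<mu> > 0" and "\<alpha> 1 = 0" and "c 1 = 0"
    and "\<exists>\<epsilon>>0. \<forall>t\<in>{0<..<\<epsilon>}.
        summable (\<lambda>n. \<alpha> (Suc n) * t ^ Suc n) \<and>
        summable (\<lambda>n. c (Suc n) * t ^ Suc n) \<and>
        Delta \<phi> w \<mu> p (m_fun w p - t) =
          1 - \<mu> / mu_p \<phi> w p
            - \<mu> * ln t * (\<Sum>n. \<alpha> (Suc n) * t ^ Suc n)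
            - \<mu> * (\<Sum>n. c (Suc n) * t ^ Suc n)"
  obtains \<epsilon> A B where "\<epsilon> > 0" and "isCont A 0" and "isCont B 0"
    and "\<And>t. t \<in> {0<..<\<epsilon>} \<Longrightarrow>
           Omega \<phi> w p (m_fun w p - t) = 1 / mu_p \<phi> w p + ln t * (t^2 * A t) + t^2 * B t"
proof -
  obtain \<epsilon> where "\<epsilon> > 0" and expansion: "\<forall>t\<in>{0<..<\<epsilon>}.
        summable (\<lambda>n. \<alpha> (Suc n) * t ^ Suc n) \<and> summable (\<lambda>n. c (Suc n) * t ^ Suc n) \<and>
        Delta \<phi> w \<mu> p (m_fun w p - t) = 1 - \<mu> / mu_p \<phi> w p
          - \<mu> * ln t * (\<Sum>n. \<alpha> (Suc n) * t ^ Suc n) - \<mu> * (\<Sum>n. c (Suc n) * t ^ Suc n)"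
    using assms(4) by blast
  have summable: "summable (\<lambda>n. \<alpha> (Suc n) * t ^ Suc n)" "summable (\<lambda>n. c (Suc n) * t ^ Suc n)"
    if "t \<in> {0<..<\<epsilon>}" for t
    using expansion that by blast+
  obtain A where A: "isCont A 0" "\<And>t. t \<in> {0<..<\<epsilon>} \<Longrightarrow> (\<Sum>n. \<alpha> (Suc n) * t ^ Suc n) = t^2 * A t"
    using power_series_without_linear_term[where a=\<alpha>, OF \<open>\<epsilon> > 0\<close> \<open>\<alpha> 1 = 0\<close> summable(1)] by blast
  obtain B where B: "isCont B 0" "\<And>t. t \<in> {0<..<\<epsilon>} \<Longrightarrow> (\<Sum>n. c (Suc n) * t ^ Suc n) = t^2 * B t"
    using power_series_without_linear_term[where a=c, OF \<open>\<epsilon> > 0\<close> \<open>c 1 = 0\<close> summable(2)] by blast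
  have "Omega \<phi> w p (m_fun w p - t) = 1 / mu_p \<phi> w p + ln t * (t^2 * A t) + t^2 * B t"
    if "t \<in> {0<..<\<epsilon>}" for t
  proof -
    have "1 - \<mu> * Omega \<phi> w p (m_fun w p - t)
            = 1 - \<mu> / mu_p \<phi> w p - \<mu> * ln t * (t^2 * A t) - \<mu> * (t^2 * B t)"
      using expansion that A(2)[OF that] B(2)[OF that] unfolding Delta_def by simp
    hence "\<mu> * Omega \<phi> w p (m_fun w p - t) = \<mu> * (1 / mu_p \<phi> w p + ln t * (t^2 * A t) + t^2 * B t)"
      by (simp add: algebra_simps)
    thus ?thesis
      using \<open>\<mu> > 0\<close> by simp
  qed
  with \<open>\<epsilon> > 0\<close> A(1) B(1) show ?thesis
    using that by blast
qed

theorem lemma3p4: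
  fixes \<phi> :: "real^2 \<Rightarrow> real"
    and w :: "real^2 \<Rightarrow> real^2 \<Rightarrow> real"
    and \<delta> :: real
    and q0 :: "real^2 \<Rightarrow> real^2"
    and p :: "real^2"
    and \<mu> :: real
    and \<alpha> c :: "nat \<Rightarrow> real"
  assumes phi_analytic: "real_analytic_on UNIV \<phi>"
    and phi_periodic: "torus_periodic \<phi>"
    and phi_nontrivial: "\<exists>x. \<phi> x \<noteq> 0"
    and w_analytic: "real_analytic_on UNIV (join_fun w)"
    and w_periodic: "torus_periodic (join_fun w)"
    and w_min: "unique_nondeg_min (join_fun w) 0"
    and delta_pos: "\<delta> > 0"
    and q0_analytic: "\<forall>i. real_analytic_on (ball 0 \<delta>) (\<lambda>p'. q0 p' $ i)"
    and q0_min: "\<forall>p'\<in>ball 0 \<delta>. unique_nondeg_min (w p') (q0 p')"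
    and p_in: "p \<in> ball 0 \<delta>"
    and phi_q0: "\<phi> (q0 p) = 0"
    and mu_pos: "\<mu> > 0"
    and expansion: "\<exists>\<epsilon>>0. \<forall>t\<in>{0<..<\<epsilon>}.
        summable (\<lambda>n. \<alpha> (Suc n) * t ^ Suc n) \<and>
        summable (\<lambda>n. c (Suc n) * t ^ Suc n) \<and>
        Delta \<phi> w \<mu> p (m_fun w p - t) =
          1 - \<mu> / mu_p \<phi> w p
            - \<mu> * ln t * (\<Sum>n. \<alpha> (Suc n) * t ^ Suc n)
            - \<mu> * (\<Sum>n. c (Suc n) * t ^ Suc n)"
  shows "\<bar>\<alpha> 1\<bar> + \<bar>c 1\<bar> \<noteq> 0"
proof (rule ccontr)
  assume "\<not> \<bar>\<alpha> 1\<bar> + \<bar>c 1\<bar> \<noteq> 0"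
  hence "\<alpha> 1 = 0" and "c 1 = 0" by auto
  then obtain \<epsilon> A B where "\<epsilon> > 0" "isCont A 0" "isCont B 0" and "\<And>t. t \<in> {0<..<\<epsilon>} \<Longrightarrow>
      Omega \<phi> w p (m_fun w p - t) = 1 / mu_p \<phi> w p + ln t * (t^2 * A t) + t^2 * B t"
    using Omega_expansion_without_linear_terms[OF mu_pos _ _ expansion] by blast
  hence quotient_to_0: "((\<lambda>t. (Omega \<phi> w p (m_fun w p - t/2) - Omega \<phi> w p (m_fun w p - t)) / t)
                          \<longlongrightarrow> 0) (at_right 0)"
    using halving_quotient_tendsto_zero[where g="\<lambda>t. Omega \<phi> w p (m_fun w p - t)"] by blast
  have continuous: "continuous_on UNIV \<phi>" "continuous_on UNIV (w p)"
    using phi_analytic w_analytic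
    by (auto intro: real_analytic_on_imp_continuous_on continuous_on_join_fun_slice)
  have m_le: "m_fun w p \<le> w p s" for s
    using q0_min p_in unfolding unique_nondeg_min_def by (blast intro: m_fun_le)
  obtain K where "K > 0" and lower: "eventually (\<lambda>t. K \<le>
      (Omega \<phi> w p (m_fun w p - t/2) - Omega \<phi> w p (m_fun w p - t)) / t) (at_right 0)"
    using Omega_halving_quotient_eventually_ge[where w=w and p=p, OF continuous m_le phi_periodic]
      phi_nontrivial by blast
  have "K \<le> 0"
    using lower by (rule tendsto_lowerbound[OF quotient_to_0]) simp
  with \<open>K > 0\<close> show False by simp
qed

end
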